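(* Let $\Gamma$ be a symmetric bimatrix game. The distribution of the players' actions in any fully symmetric indirect correlated equilibrium of $\Gamma$ is an exchangeable equilibrium of $\Gamma$, and every exchangeable equilibrium of $\Gamma$ arises as the distribution of actions of some fully symmetric indirect correlated equilibrium.
   Context: A symmetric bimatrix game: two players with common finite strategy set $C_1$ and utilities with $u_1(s_1,s_2)=u_2(s_2,s_1)$. A correlated equilibrium is a distribution $\pi$ on $C_1\times C_1$ with $\sum_{s_{-i}}[u_i(t_i,s_{-i})-u_i(s)]\pi(s)\le0$ for each player $i$ and all $s_i,t_i\in C_1$. An exchangeable equilibrium is a correlated equilibrium whose two coordinates are conditionally i.i.d., equivalently a correlated equilibrium of the form $\sum_{i=1}^k\lambda_ix_ix_i^T$ with $x_i$ probability vectors on $C_1$ and $\lambda$ a probability vector. A correlation scheme consists of a random state of the world, independent private noise signals for each player (independent of the state), for each player a map from (state, own noise) to his information, and for each player $i$ a function $f_i$ from his information to an action in $C_1$; these data are known to the players, only realizations are hidden. It is an indirect correlated equilibrium if no player can increase his expected utility by unilaterally replacing $f_i$ by another function of his information. It is fully symmetric if all players have the same noise distribution, the same map from state and noise to information, and the same map from information to action. *)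

theory Defs
  imports "HOL-Probability.Probability"
begin

text \<open>A bimatrix game with common finite strategy set (a finite type 'a), utilities
  u1 (player 1) and u2 (player 2), both indexed by the action profile (s1, s2).\<close>

definition symmetric_game :: "('a \<Rightarrow> 'a \<Rightarrow> real) \<Rightarrow> ('a \<Rightarrow> 'a \<Rightarrow> real) \<Rightarrow> bool" where
  "symmetric_game u1 u2 \<longleftrightarrow> (\<forall>s1 s2. u1 s1 s2 = u2 s2 s1)"

definition correlated_eq ::
  "('a::finite \<Rightarrow> 'a \<Rightarrow> real) \<Rightarrow> ('a \<Rightarrow> 'a \<Rightarrow> real) \<Rightarrow> ('a \<Rightarrow> 'a \<Rightarrow> real) \<Rightarrow> bool" where
  "correlated_eq u1 u2 \<pi> \<longleftrightarrow>
     (\<forall>s1 s2. 0 \<le> \<pi> s1 s2) \<and> (\<Sum>s1\<in>UNIV. \<Sum>s2\<in>UNIV. \<pi> s1 s2) = 1 \<and>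
     (\<forall>s t. (\<Sum>s2\<in>UNIV. (u1 t s2 - u1 s s2) * \<pi> s s2) \<le> 0) \<and>
     (\<forall>s t. (\<Sum>s1\<in>UNIV. (u2 s1 t - u2 s1 s) * \<pi> s1 s) \<le> 0)"

definition exchangeable_eq ::
  "('a::finite \<Rightarrow> 'a \<Rightarrow> real) \<Rightarrow> ('a \<Rightarrow> 'a \<Rightarrow> real) \<Rightarrow> ('a \<Rightarrow> 'a \<Rightarrow> real) \<Rightarrow> bool" where
  "exchangeable_eq u1 u2 \<pi> \<longleftrightarrow> correlated_eq u1 u2 \<pi> \<and>
     (\<exists>(k::nat) (w::nat \<Rightarrow> real) (x::nat \<Rightarrow> 'a \<Rightarrow> real).
        (\<forall>i<k. 0 \<le> w i) \<and> (\<Sum>i<k. w i) = 1 \<and>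
        (\<forall>i<k. (\<forall>a. 0 \<le> x i a) \<and> (\<Sum>a\<in>UNIV. x i a) = 1) \<and>
        (\<forall>a b. \<pi> a b = (\<Sum>i<k. w i * x i a * x i b)))"

text \<open>Fully symmetric correlation scheme for two players:
  state of the world w with distribution P; private noises n1, n2, i.i.d. with
  distribution Q, independent of the state (joint law P x Q x Q);
  common information map I : (state, own noise) -> information (measurable space S);
  common decision rule f : information -> action.\<close>

definition scheme_space :: "'w measure \<Rightarrow> 'n measure \<Rightarrow> ('w \<times> 'n \<times> 'n) measure" where
  "scheme_space P Q = P \<Otimes>\<^sub>M (Q \<Otimes>\<^sub>M Q)"

definition fs_scheme ::
  "'w measure \<Rightarrow> 'n measure \<Rightarrow> 'i measure \<Rightarrow> ('w \<times> 'n \<Rightarrow> 'i) \<Rightarrow> ('i \<Rightarrow> 'a) \<Rightarrow> bool" where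
  "fs_scheme P Q S I f \<longleftrightarrow> prob_space P \<and> prob_space Q \<and>
     I \<in> measurable (P \<Otimes>\<^sub>M Q) S \<and> f \<in> measurable S (count_space UNIV)"

definition fs_indirect_CE ::
  "('a::finite \<Rightarrow> 'a \<Rightarrow> real) \<Rightarrow> ('a \<Rightarrow> 'a \<Rightarrow> real) \<Rightarrow>
   'w measure \<Rightarrow> 'n measure \<Rightarrow> 'i measure \<Rightarrow> ('w \<times> 'n \<Rightarrow> 'i) \<Rightarrow> ('i \<Rightarrow> 'a) \<Rightarrow> bool" where
  "fs_indirect_CE u1 u2 P Q S I f \<longleftrightarrow> fs_scheme P Q S I f \<and>
     (\<forall>g \<in> measurable S (count_space UNIV).
        (\<integral>(w, n1, n2). u1 (g (I (w, n1))) (f (I (w, n2))) \<partial>scheme_space P Q)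
          \<le> (\<integral>(w, n1, n2). u1 (f (I (w, n1))) (f (I (w, n2))) \<partial>scheme_space P Q)
      \<and> (\<integral>(w, n1, n2). u2 (f (I (w, n1))) (g (I (w, n2))) \<partial>scheme_space P Q)
          \<le> (\<integral>(w, n1, n2). u2 (f (I (w, n1))) (f (I (w, n2))) \<partial>scheme_space P Q))"

definition action_dist ::
  "'w measure \<Rightarrow> 'n measure \<Rightarrow> ('w \<times> 'n \<Rightarrow> 'i) \<Rightarrow> ('i \<Rightarrow> 'a) \<Rightarrow> 'a \<Rightarrow> 'a \<Rightarrow> real" where
  "action_dist P Q I f a b =
     measure (scheme_space P Q)
       {(w, n1, n2) \<in> space (scheme_space P Q). f (I (w, n1)) = a \<and> f (I (w, n2)) = b}"

end

theory Submission
  imports Defs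
begin

(* Given the state w, the two players' actions are i.i.d. with the law x_w of f (I (w, n)), so the
   action distribution is the average of the product distributions x_w x_w^T.  Any linear functional
   bounded below on all such products is then bounded below at the average, so by the separating
   hyperplane theorem the average lies in the convex hull of the compact set of products: it is a
   finite mixture of them.  Conversely, a mixture of the x_i x_i^T with weights w_i is realised by
   drawing the state i with probability w_i and a noise that samples an action from every x_j
   independently.  If a player's information is nothing but his recommended action, the indirect
   equilibrium conditions are exactly the obedience conditions of a correlated equilibrium. *)

lemma integral_finite_pair_values:
  fixes X Y :: "'x \<Rightarrow> 'a::finite" and c :: "'a \<Rightarrow> 'a \<Rightarrow> real"
  assumes "finite_measure M"
    and [measurable]: "X \<in> measurable M (count_space UNIV)" "Y \<in> measurable M (count_space UNIV)"
  shows "(\<integral>z. c (X z) (Y z) \<partial>M) =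
    (\<Sum>a\<in>UNIV. \<Sum>b\<in>UNIV. c a b * measure M {z\<in>space M. X z = a \<and> Y z = b})"
proof -
  interpret finite_measure M by fact
  let ?E = "\<lambda>a b. {z\<in>space M. X z = a \<and> Y z = b}"
  have [measurable]: "?E a b \<in> sets M" for a b by measurable
  have "c (X z) (Y z) = (\<Sum>a\<in>UNIV. \<Sum>b\<in>UNIV. c a b * indicator (?E a b) z)" if "z \<in> space M" for z
  proof -
    have "(\<Sum>b\<in>UNIV. c a b * indicator (?E a b) z) = (if a = X z then c a (Y z) else 0)" for a
      using that by (auto simp: indicator_def)
    then show ?thesis by simp
  qed
  then have "(\<integral>z. c (X z) (Y z) \<partial>M) = (\<integral>z. (\<Sum>a\<in>UNIV. \<Sum>b\<in>UNIV. c a b * indicator (?E a b) z) \<partial>M)"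
    by (intro Bochner_Integration.integral_cong) auto
  also have "\<dots> = (\<Sum>a\<in>UNIV. \<Sum>b\<in>UNIV. c a b * measure M (?E a b))"
  proof -
    have "integrable M (\<lambda>z. c a b * indicator (?E a b) z)" for a b
      by (simp add: less_top[symmetric])
    then show ?thesis
      by (simp only: Bochner_Integration.integral_sum Bochner_Integration.integrable_sum
          integral_mult_right_zero) simp
  qed
  finally show ?thesis .
qed

lemma sum_measure_finite_values:
  fixes G :: "'n \<Rightarrow> 'a::finite"
  assumes "prob_space Q" and [measurable]: "G \<in> measurable Q (count_space UNIV)"
  shows "(\<Sum>a\<in>UNIV. measure Q {n\<in>space Q. G n = a}) = 1"
proof -
  interpret prob_space Q by fact
  have "(\<Sum>a\<in>UNIV. measure Q {n\<in>space Q. G n = a}) = measure Q (\<Union>a. {n\<in>space Q. G n = a})"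
    by (intro finite_measure_finite_Union[symmetric]) (auto simp: disjoint_family_on_def)
  also have "(\<Union>a. {n\<in>space Q. G n = a}) = space Q" by blast
  finally show ?thesis by (simp add: prob_space)
qed

lemma integral_iid_pair:
  fixes G :: "'n \<Rightarrow> 'a::finite" and c :: "'a \<Rightarrow> 'a \<Rightarrow> real"
  assumes "prob_space Q" and [measurable]: "G \<in> measurable Q (count_space UNIV)"
  shows "(\<integral>y. c (G (fst y)) (G (snd y)) \<partial>(Q \<Otimes>\<^sub>M Q)) =
    (\<Sum>a\<in>UNIV. \<Sum>b\<in>UNIV. c a b * (measure Q {n\<in>space Q. G n = a} * measure Q {n\<in>space Q. G n = b}))"
proof -
  interpret Q: prob_space Q by fact
  interpret QQ: pair_prob_space Q Q ..
  have "measure (Q \<Otimes>\<^sub>M Q) {y\<in>space (Q \<Otimes>\<^sub>M Q). G (fst y) = a \<and> G (snd y) = b}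
      = measure Q {n\<in>space Q. G n = a} * measure Q {n\<in>space Q. G n = b}" for a b
  proof -
    have "{y\<in>space (Q \<Otimes>\<^sub>M Q). G (fst y) = a \<and> G (snd y) = b}
        = {n\<in>space Q. G n = a} \<times> {n\<in>space Q. G n = b}"
      by (auto simp: space_pair_measure)
    then show ?thesis
      by (simp add: measure_def Q.emeasure_pair_measure_Times enn2real_mult)
  qed
  then show ?thesis
    by (subst integral_finite_pair_values[where X="\<lambda>y. G (fst y)" and Y="\<lambda>y. G (snd y)"])
      simp_all
qed

definition cond_action_law :: "'n measure \<Rightarrow> ('w \<times> 'n \<Rightarrow> 'a) \<Rightarrow> 'w \<Rightarrow> 'a \<Rightarrow> real" where
  "cond_action_law Q F w a = measure Q {n\<in>space Q. F (w, n) = a}"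

context
  fixes P :: "'w measure" and Q :: "'n measure" and F :: "'w \<times> 'n \<Rightarrow> 'a::finite"
    and c :: "'a \<Rightarrow> 'a \<Rightarrow> real"
  assumes P: "prob_space P" and Q: "prob_space Q"
    and F[measurable]: "F \<in> measurable (P \<Otimes>\<^sub>M Q) (count_space UNIV)"
begin

lemma integral_scheme_space_eq_cond_action_law:
  "(\<integral>(w, n1, n2). c (F (w, n1)) (F (w, n2)) \<partial>scheme_space P Q) =
    (\<integral>w. (\<Sum>a\<in>UNIV. \<Sum>b\<in>UNIV. c a b * (cond_action_law Q F w a * cond_action_law Q F w b)) \<partial>P)"
  and integrable_cond_action_law:
  "integrable P (\<lambda>w. \<Sum>a\<in>UNIV. \<Sum>b\<in>UNIV. c a b * (cond_action_law Q F w a * cond_action_law Q F w b))"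
proof -
  interpret P: prob_space P by (fact P)
  interpret Q: prob_space Q by (fact Q)
  interpret QQ: pair_prob_space Q Q ..
  interpret PQQ: pair_prob_space P "Q \<Otimes>\<^sub>M Q" ..
  let ?h = "\<lambda>(w, n1, n2). c (F (w, n1)) (F (w, n2))"
  let ?L = "cond_action_law Q F"
  have "\<bar>c a b\<bar> \<le> (\<Sum>p\<in>UNIV. \<bar>case_prod c p\<bar>)" for a b
    using member_le_sum[of "(a, b)" UNIV "\<lambda>p. \<bar>case_prod c p\<bar>"] by simp
  then have int: "integrable (P \<Otimes>\<^sub>M (Q \<Otimes>\<^sub>M Q)) ?h"
    by (intro PQQ.P.integrable_const_bound[where B="\<Sum>p\<in>UNIV. \<bar>case_prod c p\<bar>"])
       (auto split: prod.split)
  have inner: "(\<integral>y. ?h (w, y) \<partial>(Q \<Otimes>\<^sub>M Q)) =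
      (\<Sum>a\<in>UNIV. \<Sum>b\<in>UNIV. c a b * (?L w a * ?L w b))" if "w \<in> space P" for w
  proof -
    have [measurable]: "(\<lambda>n. F (w, n)) \<in> measurable Q (count_space UNIV)"
      using measurable_Pair2[OF F that] .
    show ?thesis
      using integral_iid_pair[OF Q, of "\<lambda>n. F (w, n)" c]
      by (simp add: case_prod_beta cond_action_law_def)
  qed
  show "(\<integral>(w, n1, n2). c (F (w, n1)) (F (w, n2)) \<partial>scheme_space P Q) =
    (\<integral>w. (\<Sum>a\<in>UNIV. \<Sum>b\<in>UNIV. c a b * (?L w a * ?L w b)) \<partial>P)"
    using PQQ.integral_fst'[OF int] inner
    by (simp add: scheme_space_def cong: Bochner_Integration.integral_cong)
  show "integrable P (\<lambda>w. \<Sum>a\<in>UNIV. \<Sum>b\<in>UNIV. c a b * (?L w a * ?L w b))"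
    using PQQ.integrable_fst'[OF int] inner
    by (simp cong: Bochner_Integration.integrable_cong)
qed

lemma integral_scheme_space_eq_joint_law:
  "(\<integral>(w, n1, n2). c (F (w, n1)) (F (w, n2)) \<partial>scheme_space P Q) =
    (\<Sum>a\<in>UNIV. \<Sum>b\<in>UNIV. c a b * measure (scheme_space P Q)
        {(w, n1, n2) \<in> space (scheme_space P Q). F (w, n1) = a \<and> F (w, n2) = b})"
proof -
  interpret PQQ: prob_space "scheme_space P Q"
    unfolding scheme_space_def using P Q by (intro prob_space_pair prob_space_pair)
  have "(\<integral>(w, n1, n2). c (F (w, n1)) (F (w, n2)) \<partial>scheme_space P Q) =
      (\<integral>z. c (F (fst z, fst (snd z))) (F (fst z, snd (snd z))) \<partial>scheme_space P Q)"
    by (simp add: split_beta')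
  also have "\<dots> = (\<Sum>a\<in>UNIV. \<Sum>b\<in>UNIV. c a b * measure (scheme_space P Q)
        {z \<in> space (scheme_space P Q). F (fst z, fst (snd z)) = a \<and> F (fst z, snd (snd z)) = b})"
    by (rule integral_finite_pair_values) (simp, simp_all add: scheme_space_def)
  also have "\<dots> = (\<Sum>a\<in>UNIV. \<Sum>b\<in>UNIV. c a b * measure (scheme_space P Q)
        {(w, n1, n2) \<in> space (scheme_space P Q). F (w, n1) = a \<and> F (w, n2) = b})"
    by (simp add: split_beta')
  finally show ?thesis .
qed

end

lemma fs_schemeD:
  assumes "fs_scheme P Q S I f"
  shows "prob_space P" "prob_space Q" "(\<lambda>z. f (I z)) \<in> measurable (P \<Otimes>\<^sub>M Q) (count_space UNIV)"
  using assms measurable_comp[of I "P \<Otimes>\<^sub>M Q" S f "count_space UNIV"]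
  by (auto simp: fs_scheme_def comp_def)

lemma integral_scheme_space_eq_action_dist:
  fixes f :: "'i \<Rightarrow> 'a::finite"
  assumes "fs_scheme P Q S I f"
  shows "(\<integral>(w, n1, n2). c (f (I (w, n1))) (f (I (w, n2))) \<partial>scheme_space P Q) =
    (\<Sum>a\<in>UNIV. \<Sum>b\<in>UNIV. c a b * action_dist P Q I f a b)"
  using integral_scheme_space_eq_joint_law[OF fs_schemeD[OF assms], of c]
  by (simp add: action_dist_def)

lemma action_dist_eq_integral_cond_action_law:
  fixes f :: "'i \<Rightarrow> 'a::finite"
  assumes scheme: "fs_scheme P Q S I f"
  shows "action_dist P Q I f a b =
    (\<integral>w. cond_action_law Q (\<lambda>z. f (I z)) w a * cond_action_law Q (\<lambda>z. f (I z)) w b \<partial>P)"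
proof -
  let ?\<delta> = "\<lambda>a' b'. if a' = a \<and> b' = b then 1 else 0 :: real"
  have delta: "(\<Sum>a'\<in>UNIV. \<Sum>b'\<in>UNIV. ?\<delta> a' b' * g a' b') = g a b" for g :: "'a \<Rightarrow> 'a \<Rightarrow> real"
  proof -
    have "(\<Sum>b'\<in>UNIV. ?\<delta> a' b' * g a' b') = (if a' = a then g a b else 0)" for a'
      by (cases "a' = a") (simp_all add: if_distrib[of "\<lambda>t. t * _"] cong: if_cong)
    then show ?thesis by simp
  qed
  show ?thesis
    using integral_scheme_space_eq_cond_action_law[OF fs_schemeD[OF scheme], of ?\<delta>]
      integral_scheme_space_eq_action_dist[OF scheme, of ?\<delta>]
    unfolding delta by simp
qed

lemma obedient_player1_iff_no_profitable_deviation: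
  fixes u \<pi> :: "'a::finite \<Rightarrow> 'a \<Rightarrow> real"
  shows "(\<forall>s t. (\<Sum>b\<in>UNIV. (u t b - u s b) * \<pi> s b) \<le> 0) \<longleftrightarrow>
    (\<forall>h. (\<Sum>a\<in>UNIV. \<Sum>b\<in>UNIV. u (h a) b * \<pi> a b) \<le> (\<Sum>a\<in>UNIV. \<Sum>b\<in>UNIV. u a b * \<pi> a b))"
    (is "?obedient \<longleftrightarrow> ?no_deviation")
proof
  assume obedient: ?obedient
  have "(\<Sum>b\<in>UNIV. u (h a) b * \<pi> a b) \<le> (\<Sum>b\<in>UNIV. u a b * \<pi> a b)" for h :: "'a \<Rightarrow> 'a" and a
  proof -
    have "(\<Sum>b\<in>UNIV. u (h a) b * \<pi> a b) - (\<Sum>b\<in>UNIV. u a b * \<pi> a b) =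
        (\<Sum>b\<in>UNIV. (u (h a) b - u a b) * \<pi> a b)"
      by (simp add: sum_subtractf[symmetric] left_diff_distrib)
    with obedient[rule_format, of "h a" a] show ?thesis by linarith
  qed
  then show ?no_deviation by (simp add: sum_mono)
next
  assume no_deviation: ?no_deviation
  show ?obedient
  proof (intro allI)
    fix s t :: 'a
    let ?h = "\<lambda>a. if a = s then t else a"
    have "(\<Sum>a\<in>UNIV. \<Sum>b\<in>UNIV. u (?h a) b * \<pi> a b) =
        (\<Sum>a\<in>UNIV. (\<Sum>b\<in>UNIV. u a b * \<pi> a b) +
          (if a = s then (\<Sum>b\<in>UNIV. (u t b - u s b) * \<pi> s b) else 0))"
      by (intro sum.cong refl) (auto simp: sum.distrib[symmetric] algebra_simps)
    also have "\<dots> = (\<Sum>a\<in>UNIV. \<Sum>b\<in>UNIV. u a b * \<pi> a b) + (\<Sum>b\<in>UNIV. (u t b - u s b) * \<pi> s b)"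
      by (simp add: sum.distrib)
    finally show "(\<Sum>b\<in>UNIV. (u t b - u s b) * \<pi> s b) \<le> 0"
      using no_deviation[rule_format, of ?h] by linarith
  qed
qed

lemma obedient_player2_iff_no_profitable_deviation:
  fixes u \<pi> :: "'a::finite \<Rightarrow> 'a \<Rightarrow> real"
  shows "(\<forall>s t. (\<Sum>a\<in>UNIV. (u a t - u a s) * \<pi> a s) \<le> 0) \<longleftrightarrow>
    (\<forall>h. (\<Sum>a\<in>UNIV. \<Sum>b\<in>UNIV. u a (h b) * \<pi> a b) \<le> (\<Sum>a\<in>UNIV. \<Sum>b\<in>UNIV. u a b * \<pi> a b))"
proof -
  have swap: "(\<Sum>a\<in>UNIV. \<Sum>b\<in>UNIV. g a b) = (\<Sum>b\<in>UNIV. \<Sum>a\<in>UNIV. g a b)" for g :: "'a \<Rightarrow> 'a \<Rightarrow> real"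
    by (rule sum.swap)
  show ?thesis
    using obedient_player1_iff_no_profitable_deviation[of "\<lambda>x y. u y x" "\<lambda>x y. \<pi> y x"]
    by (simp only: swap[of "\<lambda>a b. u a (_ b) * \<pi> a b"] swap[of "\<lambda>a b. u a b * \<pi> a b"])
qed

lemma correlated_eq_iff_no_profitable_deviation:
  "correlated_eq u1 u2 \<pi> \<longleftrightarrow>
    (\<forall>a b. 0 \<le> \<pi> a b) \<and> (\<Sum>a\<in>UNIV. \<Sum>b\<in>UNIV. \<pi> a b) = 1 \<and>
    (\<forall>h. (\<Sum>a\<in>UNIV. \<Sum>b\<in>UNIV. u1 (h a) b * \<pi> a b) \<le> (\<Sum>a\<in>UNIV. \<Sum>b\<in>UNIV. u1 a b * \<pi> a b)) \<and>
    (\<forall>h. (\<Sum>a\<in>UNIV. \<Sum>b\<in>UNIV. u2 a (h b) * \<pi> a b) \<le> (\<Sum>a\<in>UNIV. \<Sum>b\<in>UNIV. u2 a b * \<pi> a b))"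
  unfolding correlated_eq_def obedient_player1_iff_no_profitable_deviation[of u1 \<pi>]
    obedient_player2_iff_no_profitable_deviation[of u2 \<pi>] ..

lemma mem_convex_hull_if_not_separated:
  fixes C :: "'v::euclidean_space set"
  assumes "compact C"
    and unseparated: "\<And>a \<beta>. (\<And>y. y \<in> C \<Longrightarrow> \<beta> < inner a y) \<Longrightarrow> \<beta> \<le> inner a x"
  shows "x \<in> convex hull C"
proof (rule ccontr)
  assume "x \<notin> convex hull C"
  moreover have "closed (convex hull C)"
    using \<open>compact C\<close> by (intro compact_imp_closed compact_convex_hull)
  ultimately obtain a \<beta> where "inner a x < \<beta>" "\<forall>y\<in>convex hull C. \<beta> < inner a y"
    using separating_hyperplane_closed_point[OF convex_convex_hull] by blast
  then show False
    using unseparated[of \<beta> a] hull_subset[of C convex] by fastforce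
qed

lemma convex_hull_nat_indexed:
  fixes x :: "'v::real_vector"
  assumes "x \<in> convex hull C"
  obtains k :: nat and w v where "\<And>i. i < k \<Longrightarrow> 0 \<le> w i \<and> v i \<in> C" "(\<Sum>i<k. w i) = 1"
    "x = (\<Sum>i<k. w i *\<^sub>R v i)"
proof -
  obtain S u where S: "finite S" "S \<subseteq> C" "\<forall>y\<in>S. 0 \<le> u y" "sum u S = 1"
    "(\<Sum>y\<in>S. u y *\<^sub>R y) = x"
    using assms unfolding convex_hull_explicit by blast
  obtain h where h: "bij_betw h {..<card S} S"
    using ex_bij_betw_nat_finite[OF \<open>finite S\<close>] by (auto simp: lessThan_atLeast0)
  have "0 \<le> u (h i) \<and> h i \<in> C" if "i < card S" for i
    using S(2,3) bij_betwE[OF h] that by blast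
  moreover have "(\<Sum>i<card S. u (h i)) = 1"
    using S(4) sum.reindex_bij_betw[OF h, of u] by simp
  moreover have "x = (\<Sum>i<card S. u (h i) *\<^sub>R h i)"
    using S(5) sum.reindex_bij_betw[OF h, of "\<lambda>y. u y *\<^sub>R y"] by simp
  ultimately show ?thesis by (intro that[of "card S" "\<lambda>i. u (h i)" h])
qed

definition prob_simplex :: "(real ^ 'a::finite) set" where
  "prob_simplex = {y. (\<forall>a. 0 \<le> y $ a) \<and> (\<Sum>a\<in>UNIV. y $ a) = 1}"

definition self_product :: "real ^ 'a::finite \<Rightarrow> real ^ ('a \<times> 'a)" where
  "self_product y = (\<chi> p. y $ fst p * y $ snd p)"

lemma compact_prob_simplex: "compact prob_simplex"
proof -
  have "closed (prob_simplex :: (real ^ 'a) set)"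
    unfolding prob_simplex_def
    by (intro closed_Collect_conj closed_Collect_all closed_Collect_le closed_Collect_eq continuous_intros)
  moreover have "prob_simplex \<subseteq> cbox 0 (1 :: real ^ 'a)"
  proof
    fix y :: "real ^ 'a" assume y: "y \<in> prob_simplex"
    have "y $ a \<le> 1" for a
      using y member_le_sum[of a UNIV "\<lambda>a. y $ a"] unfolding prob_simplex_def by auto
    with y show "y \<in> cbox 0 1" by (auto simp: mem_box_cart prob_simplex_def)
  qed
  ultimately show ?thesis
    by (simp add: compact_eq_bounded_closed bounded_subset[OF bounded_cbox])
qed

lemma inner_vec_pair_index:
  fixes A B :: "real ^ ('a::finite \<times> 'a)"
  shows "inner A B = (\<Sum>a\<in>UNIV. \<Sum>b\<in>UNIV. A $ (a, b) * B $ (a, b))"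
proof -
  have "inner A B = (\<Sum>p\<in>UNIV \<times> UNIV. A $ p * B $ p)"
    by (simp add: inner_vec_def)
  then show ?thesis by (simp add: sum.cartesian_product case_prod_beta)
qed

definition product_mixture :: "('a::finite \<Rightarrow> 'a \<Rightarrow> real) \<Rightarrow> bool" where
  "product_mixture \<pi> \<longleftrightarrow>
     (\<exists>(k::nat) (w::nat \<Rightarrow> real) (x::nat \<Rightarrow> 'a \<Rightarrow> real).
        (\<forall>i<k. 0 \<le> w i) \<and> (\<Sum>i<k. w i) = 1 \<and>
        (\<forall>i<k. (\<forall>a. 0 \<le> x i a) \<and> (\<Sum>a\<in>UNIV. x i a) = 1) \<and>
        (\<forall>a b. \<pi> a b = (\<Sum>i<k. w i * x i a * x i b)))"

lemma exchangeable_eq_iff_product_mixture: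
  "exchangeable_eq u1 u2 \<pi> \<longleftrightarrow> correlated_eq u1 u2 \<pi> \<and> product_mixture \<pi>"
  unfolding exchangeable_eq_def product_mixture_def ..

lemma product_mixture_if_not_separated:
  fixes \<pi> :: "'a::finite \<Rightarrow> 'a \<Rightarrow> real"
  assumes unseparated: "\<And>(c :: 'a \<Rightarrow> 'a \<Rightarrow> real) \<beta>.
      (\<And>y. (\<forall>a. 0 \<le> y a) \<Longrightarrow> (\<Sum>a\<in>UNIV. y a) = 1 \<Longrightarrow>
        \<beta> < (\<Sum>a\<in>UNIV. \<Sum>b\<in>UNIV. c a b * (y a * y b))) \<Longrightarrow>
      \<beta> \<le> (\<Sum>a\<in>UNIV. \<Sum>b\<in>UNIV. c a b * \<pi> a b)"
  shows "product_mixture \<pi>"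
proof -
  define \<pi>v :: "real ^ ('a \<times> 'a)" where "\<pi>v = (\<chi> p. \<pi> (fst p) (snd p))"
  have "\<pi>v \<in> convex hull (self_product ` prob_simplex)"
  proof (rule mem_convex_hull_if_not_separated)
    show "compact (self_product ` (prob_simplex :: (real ^ 'a) set))"
      unfolding self_product_def
      by (intro compact_continuous_image compact_prob_simplex continuous_intros)
    fix A :: "real ^ ('a \<times> 'a)" and \<beta>
    assume separates: "\<And>y. y \<in> self_product ` prob_simplex \<Longrightarrow> \<beta> < inner A y"
    have "\<beta> < (\<Sum>a\<in>UNIV. \<Sum>b\<in>UNIV. A $ (a, b) * (y a * y b))"
      if "\<forall>a. 0 \<le> y a" "(\<Sum>a\<in>UNIV. y a) = 1" for y :: "'a \<Rightarrow> real"
    proof -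
      have "(\<chi> a. y a) \<in> prob_simplex" using that by (simp add: prob_simplex_def)
      then have "\<beta> < inner A (self_product (\<chi> a. y a))" by (intro separates imageI)
      then show ?thesis by (simp add: inner_vec_pair_index self_product_def)
    qed
    then show "\<beta> \<le> inner A \<pi>v"
      using unseparated[of \<beta> "\<lambda>a b. A $ (a, b)"] by (simp add: inner_vec_pair_index \<pi>v_def)
  qed
  then obtain k :: nat and w v
    where kwv: "\<And>i. i < k \<Longrightarrow> 0 \<le> w i \<and> v i \<in> self_product ` prob_simplex"
      "(\<Sum>i<k. w i) = 1" "\<pi>v = (\<Sum>i<k. w i *\<^sub>R v i)"
    by (rule convex_hull_nat_indexed) blast
  have "\<exists>z. z \<in> prob_simplex \<and> v i = self_product z" if "i < k" for i
    using kwv(1)[OF that] by blast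
  then obtain y where y: "\<And>i. i < k \<Longrightarrow> y i \<in> prob_simplex \<and> v i = self_product (y i)"
    by metis
  show ?thesis
    unfolding product_mixture_def
  proof (intro exI conjI allI impI)
    show "0 \<le> w i" if "i < k" for i using kwv(1)[OF that] by blast
    show "(\<Sum>i<k. w i) = 1" by (fact kwv(2))
    show "0 \<le> y i $ a" "(\<Sum>a\<in>UNIV. y i $ a) = 1" if "i < k" for i a
      using y[OF that] by (auto simp: prob_simplex_def)
    fix a b
    have "\<pi> a b = (\<Sum>i<k. w i * v i $ (a, b))"
      using kwv(3) by (simp add: \<pi>v_def vec_eq_iff)
    also have "\<dots> = (\<Sum>i<k. w i * y i $ a * y i $ b)"
      using y by (simp add: self_product_def mult.assoc)
    finally show "\<pi> a b = (\<Sum>i<k. w i * y i $ a * y i $ b)" .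
  qed
qed

lemma fs_indirect_CE_imp_correlated_eq:
  fixes f :: "'i \<Rightarrow> 'a::finite"
  assumes CE: "fs_indirect_CE u1 u2 P Q S I f"
  shows "correlated_eq u1 u2 (action_dist P Q I f)"
proof -
  let ?\<pi> = "action_dist P Q I f"
  have scheme: "fs_scheme P Q S I f" using CE by (simp add: fs_indirect_CE_def)
  note expectation = integral_scheme_space_eq_action_dist[OF scheme]
  have "(\<Sum>a\<in>UNIV. \<Sum>b\<in>UNIV. ?\<pi> a b) = 1"
  proof -
    interpret prob_space "scheme_space P Q"
      using fs_schemeD[OF scheme] by (simp add: scheme_space_def prob_space_pair)
    show ?thesis using expectation[of "\<lambda>_ _. 1"] by (simp add: split_beta' prob_space)
  qed
  moreover have "(\<Sum>a\<in>UNIV. \<Sum>b\<in>UNIV. u1 (h a) b * ?\<pi> a b) \<le> (\<Sum>a\<in>UNIV. \<Sum>b\<in>UNIV. u1 a b * ?\<pi> a b)"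
    and "(\<Sum>a\<in>UNIV. \<Sum>b\<in>UNIV. u2 a (h b) * ?\<pi> a b) \<le> (\<Sum>a\<in>UNIV. \<Sum>b\<in>UNIV. u2 a b * ?\<pi> a b)"
    for h
  proof -
    have "(\<lambda>i. h (f i)) \<in> measurable S (count_space UNIV)"
      using scheme by (auto simp: fs_scheme_def intro: measurable_compose[OF _ measurable_count_space])
    with CE show "(\<Sum>a\<in>UNIV. \<Sum>b\<in>UNIV. u1 (h a) b * ?\<pi> a b) \<le> (\<Sum>a\<in>UNIV. \<Sum>b\<in>UNIV. u1 a b * ?\<pi> a b)"
      and "(\<Sum>a\<in>UNIV. \<Sum>b\<in>UNIV. u2 a (h b) * ?\<pi> a b) \<le> (\<Sum>a\<in>UNIV. \<Sum>b\<in>UNIV. u2 a b * ?\<pi> a b)"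
      by (auto simp: fs_indirect_CE_def expectation[symmetric])
  qed
  ultimately show ?thesis
    by (simp add: correlated_eq_iff_no_profitable_deviation action_dist_def)
qed

lemma fs_scheme_product_mixture:
  fixes f :: "'i \<Rightarrow> 'a::finite"
  assumes scheme: "fs_scheme P Q S I f"
  shows "product_mixture (action_dist P Q I f)"
proof (rule product_mixture_if_not_separated)
  fix c :: "'a \<Rightarrow> 'a \<Rightarrow> real" and \<beta>
  assume above: "\<And>y. (\<forall>a. 0 \<le> y a) \<Longrightarrow> (\<Sum>a\<in>UNIV. y a) = 1 \<Longrightarrow>
    \<beta> < (\<Sum>a\<in>UNIV. \<Sum>b\<in>UNIV. c a b * (y a * y b))"
  note P = fs_schemeD(1)[OF scheme] and Q = fs_schemeD(2)[OF scheme]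
    and F = fs_schemeD(3)[OF scheme]
  let ?L = "cond_action_law Q (\<lambda>z. f (I z))"
  have "\<beta> \<le> (\<Sum>a\<in>UNIV. \<Sum>b\<in>UNIV. c a b * (?L w a * ?L w b))" if "w \<in> space P" for w
  proof -
    have "(\<lambda>n. f (I (w, n))) \<in> measurable Q (count_space UNIV)"
      using measurable_Pair2[OF F that] .
    then show ?thesis
      using above[of "?L w"] sum_measure_finite_values[OF Q]
      by (fastforce simp: cond_action_law_def)
  qed
  then have "(\<integral>w. \<beta> \<partial>P) \<le> (\<integral>w. (\<Sum>a\<in>UNIV. \<Sum>b\<in>UNIV. c a b * (?L w a * ?L w b)) \<partial>P)"
    using prob_space.finite_measure[OF P]
    by (intro integral_mono integrable_cond_action_law[OF P Q F] finite_measure.integrable_const)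
  also have "\<dots> = (\<Sum>a\<in>UNIV. \<Sum>b\<in>UNIV. c a b * action_dist P Q I f a b)"
    using integral_scheme_space_eq_cond_action_law[OF P Q F, of c]
      integral_scheme_space_eq_action_dist[OF scheme, of c] by simp
  finally show "\<beta> \<le> (\<Sum>a\<in>UNIV. \<Sum>b\<in>UNIV. c a b * action_dist P Q I f a b)"
    using prob_space.prob_space[OF P] by simp
qed

lemma pmf_embed_pmf_finite_support:
  fixes g :: "'b \<Rightarrow> real"
  assumes "finite A" and "\<And>x. 0 \<le> g x" and "\<And>x. x \<notin> A \<Longrightarrow> g x = 0" and "sum g A = 1"
  shows "pmf (embed_pmf g) x = g x"
proof (rule pmf_embed_pmf)
  have "(\<integral>\<^sup>+x. ennreal (g x) \<partial>count_space UNIV) = (\<Sum>x\<in>A. ennreal (g x))"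
    using assms(1,3) by (intro nn_integral_count_space') auto
  also have "\<dots> = 1" using assms(2,4) by simp
  finally show "(\<integral>\<^sup>+x. ennreal (g x) \<partial>count_space UNIV) = 1" .
qed (fact assms)

lemma real_pmf_with_marginals:
  fixes X :: "nat \<Rightarrow> 'a::countable pmf"
  obtains q :: "real pmf" and dec :: "real \<Rightarrow> nat \<Rightarrow> 'a"
  where "\<And>j. j < k \<Longrightarrow> map_pmf (\<lambda>r. dec r j) q = X j"
proof
  \<comment> \<open>Draw all \<open>k\<close> coordinates independently and code the resulting list by a
    natural number, read as a real.\<close>
  define enc :: "(nat \<Rightarrow> 'a) \<Rightarrow> real" where "enc h = real (to_nat (map h [0..<k]))" for h
  define dec :: "real \<Rightarrow> nat \<Rightarrow> 'a" where "dec r j = (from_nat (nat \<lfloor>r\<rfloor>) :: 'a list) ! j" for r j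
  fix j assume "j < k"
  then have "map_pmf (\<lambda>h. dec (enc h) j) (Pi_pmf {..<k} undefined X) =
      map_pmf (\<lambda>h. h j) (Pi_pmf {..<k} undefined X)"
    by (intro map_pmf_cong refl) (simp add: dec_def enc_def)
  with \<open>j < k\<close> show "map_pmf (\<lambda>r. dec r j) (map_pmf enc (Pi_pmf {..<k} undefined X)) = X j"
    by (simp add: map_pmf_comp Pi_pmf_component)
qed

lemma fs_indirect_CE_if_information_reveals_action:
  fixes f :: "'i \<Rightarrow> 'a::finite" and e :: "'a \<Rightarrow> 'i"
  assumes scheme: "fs_scheme P Q S I f"
    and reveals: "\<And>z. I z = e (f (I z))"
    and CE: "correlated_eq u1 u2 (action_dist P Q I f)"
  shows "fs_indirect_CE u1 u2 P Q S I f"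
  unfolding fs_indirect_CE_def
proof (intro conjI scheme ballI)
  fix g :: "'i \<Rightarrow> 'a"
  have g_reveals: "g (I z) = g (e (f (I z)))" for z
    using reveals by metis
  note expectation = integral_scheme_space_eq_action_dist[OF scheme]
  note no_deviation = CE[unfolded correlated_eq_iff_no_profitable_deviation]
  show "(\<integral>(w, n1, n2). u1 (g (I (w, n1))) (f (I (w, n2))) \<partial>scheme_space P Q)
      \<le> (\<integral>(w, n1, n2). u1 (f (I (w, n1))) (f (I (w, n2))) \<partial>scheme_space P Q)"
    using no_deviation expectation[of "\<lambda>a b. u1 (g (e a)) b"] expectation[of u1]
    by (simp add: g_reveals)
  show "(\<integral>(w, n1, n2). u2 (f (I (w, n1))) (g (I (w, n2))) \<partial>scheme_space P Q)
      \<le> (\<integral>(w, n1, n2). u2 (f (I (w, n1))) (f (I (w, n2))) \<partial>scheme_space P Q)"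
    using no_deviation expectation[of "\<lambda>a b. u2 a (g (e b))"] expectation[of u2]
    by (simp add: g_reveals)
qed

lemma fs_scheme_measure_pmf:
  fixes I :: "'w::countable \<times> 'n \<Rightarrow> 'i"
  shows "fs_scheme (measure_pmf p) (measure_pmf q) (count_space UNIV) I f"
  unfolding fs_scheme_def
proof (intro conjI prob_space_measure_pmf)
  have "sets (measure_pmf p \<Otimes>\<^sub>M measure_pmf q) = sets (count_space UNIV \<Otimes>\<^sub>M measure_pmf q)"
    by (intro sets_pair_measure_cong) auto
  moreover have "I \<in> measurable (count_space UNIV \<Otimes>\<^sub>M measure_pmf q) (count_space UNIV)"
    by (rule measurable_pair_measure_countable1) auto
  ultimately show "I \<in> measurable (measure_pmf p \<Otimes>\<^sub>M measure_pmf q) (count_space UNIV)"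
    using measurable_cong_sets by blast
qed simp

lemma action_dist_measure_pmf:
  fixes I :: "'w::countable \<times> 'n \<Rightarrow> 'i" and f :: "'i \<Rightarrow> 'a::finite"
  assumes "finite A" and "set_pmf p \<subseteq> A"
  shows "action_dist (measure_pmf p) (measure_pmf q) I f a b =
    (\<Sum>j\<in>A. pmf p j * cond_action_law (measure_pmf q) (\<lambda>z. f (I z)) j a *
      cond_action_law (measure_pmf q) (\<lambda>z. f (I z)) j b)"
  using assms
  by (simp add: action_dist_eq_integral_cond_action_law[OF fs_scheme_measure_pmf]
      integral_measure_pmf_real subset_iff mult.commute mult.left_commute)

lemma product_mixture_imp_fs_scheme:
  fixes \<pi> :: "'a::finite \<Rightarrow> 'a \<Rightarrow> real"
  assumes "product_mixture \<pi>"
  obtains p :: "nat pmf" and q :: "real pmf" and I :: "nat \<times> real \<Rightarrow> nat \<times> real"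
    and f :: "nat \<times> real \<Rightarrow> 'a"
  where "fs_scheme (measure_pmf p) (measure_pmf q) (count_space UNIV) I f"
    and "\<And>z. I z = (to_nat (f (I z)), 0)"
    and "action_dist (measure_pmf p) (measure_pmf q) I f = \<pi>"
proof -
  obtain k :: nat and w x where w: "\<forall>i<k. 0 \<le> w i" "(\<Sum>i<k. w i) = 1"
    and x: "\<forall>i<k. (\<forall>a. 0 \<le> x i a) \<and> (\<Sum>a\<in>UNIV. x i a) = 1"
    and \<pi>: "\<And>a b. \<pi> a b = (\<Sum>i<k. w i * x i a * x i b)"
    using assms unfolding product_mixture_def by blast
  define p where "p = embed_pmf (\<lambda>i. if i < k then w i else 0)"
  have pmf_p: "pmf p i = (if i < k then w i else 0)" for i
    unfolding p_def using w by (intro pmf_embed_pmf_finite_support[where A="{..<k}"]) auto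
  have pmf_x: "pmf (embed_pmf (x j)) a = x j a" if "j < k" for j a
    using x that by (intro pmf_embed_pmf_finite_support[where A=UNIV]) auto
  obtain q and dec :: "real \<Rightarrow> nat \<Rightarrow> 'a"
    where marginal: "\<And>j. j < k \<Longrightarrow> map_pmf (\<lambda>r. dec r j) q = embed_pmf (x j)"
    by (rule real_pmf_with_marginals[of k "\<lambda>j. embed_pmf (x j)"]) blast
  \<comment> \<open>The information is the recommended action, coded into the information type \<open>nat \<times> real\<close>.\<close>
  define I :: "nat \<times> real \<Rightarrow> nat \<times> real" where "I = (\<lambda>(j, r). (to_nat (dec r j :: 'a), 0))"
  define f :: "nat \<times> real \<Rightarrow> 'a" where "f = (\<lambda>(m, _). from_nat m)"
  have action: "f (I (j, r)) = dec r j" for j r by (simp add: f_def I_def)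
  have law: "cond_action_law (measure_pmf q) (\<lambda>z. f (I z)) j a = x j a" if "j < k" for j a
  proof -
    have "cond_action_law (measure_pmf q) (\<lambda>z. f (I z)) j a =
        measure_pmf.prob (map_pmf (\<lambda>r. dec r j) q) {a}"
      by (simp add: cond_action_law_def action vimage_def)
    also have "\<dots> = x j a"
      using that by (simp add: marginal measure_pmf_single pmf_x)
    finally show ?thesis .
  qed
  have "action_dist (measure_pmf p) (measure_pmf q) I f a b = \<pi> a b" for a b
  proof -
    have "set_pmf p \<subseteq> {..<k}" by (auto simp: set_pmf_iff pmf_p split: if_splits)
    then show ?thesis
      by (simp add: action_dist_measure_pmf[where A="{..<k}"] pmf_p law \<pi>)
  qed
  moreover have "I z = (to_nat (f (I z)), 0)" for z
    by (cases z) (simp add: I_def f_def)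
  ultimately show ?thesis using fs_scheme_measure_pmf that by blast
qed

theorem proposition4p6:
  fixes u1 u2 :: "'a::finite \<Rightarrow> 'a \<Rightarrow> real"
  assumes "symmetric_game u1 u2"
  shows "(\<forall>(P::'w measure) (Q::'n measure) (S::'i measure) I f.
            fs_indirect_CE u1 u2 P Q S I f \<longrightarrow> exchangeable_eq u1 u2 (action_dist P Q I f))
       \<and> (\<forall>\<pi>. exchangeable_eq u1 u2 \<pi> \<longrightarrow>
            (\<exists>(P::nat measure) (Q::real measure) (S::(nat \<times> real) measure) I f.
               fs_indirect_CE u1 u2 P Q S I f \<and> action_dist P Q I f = \<pi>))"
proof (intro conjI allI impI)
  fix P :: "'w measure" and Q :: "'n measure" and S :: "'i measure" and I f
  assume CE: "fs_indirect_CE u1 u2 P Q S I f"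
  then have "fs_scheme P Q S I f" by (simp add: fs_indirect_CE_def)
  with CE show "exchangeable_eq u1 u2 (action_dist P Q I f)"
    by (simp add: exchangeable_eq_iff_product_mixture fs_indirect_CE_imp_correlated_eq
        fs_scheme_product_mixture)
next
  fix \<pi>
  assume "exchangeable_eq u1 u2 \<pi>"
  then have CE: "correlated_eq u1 u2 \<pi>" and "product_mixture \<pi>"
    by (simp_all add: exchangeable_eq_iff_product_mixture)
  obtain p :: "nat pmf" and q :: "real pmf" and I :: "nat \<times> real \<Rightarrow> nat \<times> real"
      and f :: "nat \<times> real \<Rightarrow> 'a"
    where "fs_scheme (measure_pmf p) (measure_pmf q) (count_space UNIV) I f"
      and "\<And>z. I z = (to_nat (f (I z)), 0)"
      and dist: "action_dist (measure_pmf p) (measure_pmf q) I f = \<pi>"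
    using \<open>product_mixture \<pi>\<close> by (rule product_mixture_imp_fs_scheme) blast
  then have "fs_indirect_CE u1 u2 (measure_pmf p) (measure_pmf q) (count_space UNIV) I f"
    using CE by (intro fs_indirect_CE_if_information_reveals_action) auto
  with dist show "\<exists>(P::nat measure) (Q::real measure) (S::(nat \<times> real) measure) I f.
      fs_indirect_CE u1 u2 P Q S I f \<and> action_dist P Q I f = \<pi>"
    by blast
qed

end
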